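(* Let $p\in\mathbb{N}$ and let $r_p$ be the maximal positive root of the equation $8r^{2p}+r^{2(p-1)}-6r^{p-1}+1=0$. Then $2r_p^{p+1}\le 1$. *)

theory Defs
  imports Complex_Main
begin

text \<open>The left-hand side of the equation 8 r^(2p) + r^(2(p-1)) - 6 r^(p-1) + 1 = 0,
  with integer exponents so that p = 0 is also meaningful.\<close>
definition rp_poly :: "nat \<Rightarrow> real \<Rightarrow> real" where
  "rp_poly p r = 8 * r powi (2 * int p) + r powi (2 * (int p - 1)) - 6 * r powi (int p - 1) + 1"

end

theory Submission
  imports Defs
begin

text \<open>With \<open>x = r\<^sup>p\<^sup>-\<^sup>1\<close> the equation reads \<open>8x\<^sup>2r\<^sup>2 = 6x - x\<^sup>2 - 1 \<le> 4x\<close>,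
  the bound being \<open>(x - 1)\<^sup>2 \<ge> 0\<close>; dividing by \<open>4x\<close> gives \<open>2xr\<^sup>2 = 2r\<^sup>p\<^sup>+\<^sup>1 \<le> 1\<close>.
  This holds for every positive root.\<close>

lemma rp_poly_in_terms_of_power_pred:
  fixes r :: real
  assumes "r \<noteq> 0"
  shows "rp_poly p r = 8 * (r powi (int p - 1))\<^sup>2 * r\<^sup>2 + (r powi (int p - 1))\<^sup>2
                        - 6 * r powi (int p - 1) + 1"
proof -
  have "2 * int p = (int p - 1) * int 2 + int 2" by simp
  hence "r powi (2 * int p) = r powi ((int p - 1) * int 2) * r powi (int 2)"
    using power_int_add[of r] assms by presburger
  hence leading: "r powi (2 * int p) = (r powi (int p - 1))\<^sup>2 * r\<^sup>2"
    by (simp only: power_int_power' power_int_of_nat)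
  have "2 * (int p - 1) = (int p - 1) * int 2" by simp
  hence middle: "r powi (2 * (int p - 1)) = (r powi (int p - 1))\<^sup>2"
    by (simp only: power_int_power')
  show ?thesis unfolding rp_poly_def leading middle by simp
qed

lemma quadratic_root_bound:
  fixes x y :: real
  assumes "x > 0" and "8 * x\<^sup>2 * y + x\<^sup>2 - 6 * x + 1 = 0"
  shows "2 * x * y \<le> 1"
proof -
  have "8 * x\<^sup>2 * y \<le> 4 * x"
    using assms(2) zero_le_power2[of "x - 1"] by (simp add: power2_diff algebra_simps)
  hence "x * (2 * x * y) \<le> x * 1" by (simp add: power2_eq_square algebra_simps)
  thus ?thesis using assms(1) by simp
qed

lemma positive_root_rp_poly_bound:
  fixes r :: real
  assumes "r > 0" and "rp_poly p r = 0"
  shows "2 * r ^ (p + 1) \<le> 1"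
proof -
  define x where "x = r powi (int p - 1)"
  have "2 * x * r\<^sup>2 \<le> 1"
  proof (rule quadratic_root_bound)
    show "x > 0" using assms(1) by (simp add: x_def)
    show "8 * x\<^sup>2 * r\<^sup>2 + x\<^sup>2 - 6 * x + 1 = 0"
      using assms rp_poly_in_terms_of_power_pred[of r p] by (simp add: x_def)
  qed
  moreover have "int (p + 1) = (int p - 1) + int 2" by simp
  hence "r ^ (p + 1) = x * r\<^sup>2"
    using power_int_add[of r] assms(1) unfolding x_def
    by (metis less_irrefl power_int_of_nat)
  ultimately show ?thesis by (simp add: mult.assoc)
qed

theorem lemma1:
  fixes p :: nat and r :: real
  assumes "r > 0" and "rp_poly p r = 0"
    and "\<And>s. s > 0 \<Longrightarrow> rp_poly p s = 0 \<Longrightarrow> s \<le> r"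
  shows "2 * r ^ (p + 1) \<le> 1"
  using assms(1,2) by (rule positive_root_rp_poly_bound)

end
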